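(* Let $\sigma=(V,\mathrm{atime},\mathrm{pos})$ be an instance of $k$-MPMD on an $H$-metric space with parameter $\gamma$. Let $\mathcal M$ be any perfect $k$-way matching of $V$ and let $M=\{\{u,v\}\in E:\exists F\in\mathcal M,\ u,v\in F\}$. Then the characteristic vector $x=\mathbb 1_M\in\{0,1\}^E$ is a feasible solution of the linear program $(\mathcal P')$. Moreover, $\mathcal P'(\sigma)\le\mathcal{OPT}(\sigma)$, where $\mathcal P'(\sigma)$ is the optimal value of $(\mathcal P')$.
   Context: $k\ge2$. An $H$-metric with parameter $\gamma$ (integer, $1\le\gamma\le k-1$) is a map $d_H:\chi^k\to[0,\infty)$ that is invariant under permutation of its arguments, is zero iff all arguments are equal, satisfies $d_H(p_1,\ldots,p_k)\le d_H(p_1,\ldots,p_i,a,\ldots,a)+d_H(a,\ldots,a,p_{i+1},\ldots,p_k)$ for all $p_j,a\in\chi$ and $i\in\{1,\dots,k\}$ (with $k-i$, resp. $i$, copies of $a$), and satisfies: $d_H(p)\le d_H(p')$ whenever the set of distinct entries of $p$ is a proper subset of that of $p'$, and $d_H(p)\le\gamma d_H(p')$ whenever these sets are equal. An instance of $k$-MPMD is $\sigma=(V,\mathrm{atime},\mathrm{pos})$ with $V=\{u_1,\ldots,u_m\}$ a set of requests ($m$ a multiple of $k$), arrival times $\mathrm{atime}:V\to\mathbb R_{\ge0}$ nondecreasing in the index, and positions $\mathrm{pos}:V\to\chi$. A perfect $k$-way matching is a partition of $V$ into $k$-element sets. For a $k$-element $F=\{v_1,\ldots,v_k\}$, $\mathrm{opt\text{-}cost}(F):=d_H(\mathrm{pos}(v_1),\ldots,\mathrm{pos}(v_k))+\sum_{i=1}^k(\max_j\mathrm{atime}(v_j)-\mathrm{atime}(v_i))$,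 and $\mathcal{OPT}(\sigma)$ is the minimum of $\sum_{F\in\mathcal M}\mathrm{opt\text{-}cost}(F)$ over perfect $k$-way matchings $\mathcal M$ (the offline optimum). The metric $d$ on $\chi$ is $d(p,q):=d_H(p,q,\ldots,q)+d_H(q,p,\ldots,p)$ (first argument once, second $k-1$ times). $E$ is the set of unordered pairs $\{u,w\}$ of distinct requests, and $\mathrm{opt\text{-}cost}(\{u,w\}):=d(\mathrm{pos}(u),\mathrm{pos}(w))+|\mathrm{atime}(u)-\mathrm{atime}(w)|$. For $S\subseteq V$, $\mathrm{sur}(S):=|S|\bmod k$ and $\delta(S)$ is the set of pairs in $E$ with exactly one element in $S$. The LP $(\mathcal P')$ is: minimize $\sum_{e\in E}\frac{1}{\gamma k^2}\mathrm{opt\text{-}cost}(e)x_e$ subject to $\sum_{e\in\delta(S)}x_e\ge\mathrm{sur}(S)(k-\mathrm{sur}(S))$ for all $S\subseteq V$, and $x_e\ge0$ for all $e\in E$. *)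

theory Defs
  imports Complex_Main "HOL-Library.Disjoint_Sets" "HOL-Library.Multiset"
begin

(* Points of chi have type 'a; a tuple in chi^k is a list of length k. *)
definition H_metric :: "nat \<Rightarrow> nat \<Rightarrow> ('a list \<Rightarrow> real) \<Rightarrow> bool" where
  "H_metric k \<gamma> dH \<longleftrightarrow>
     1 \<le> \<gamma> \<and> \<gamma> \<le> k - 1 \<and>
     (\<forall>p. length p = k \<longrightarrow> dH p \<ge> 0) \<and>
     (\<forall>p q. length p = k \<longrightarrow> mset q = mset p \<longrightarrow> dH q = dH p) \<and>
     (\<forall>p. length p = k \<longrightarrow> (dH p = 0 \<longleftrightarrow> (\<forall>x\<in>set p. \<forall>y\<in>set p. x = y))) \<and>
     (\<forall>p a i. length p = k \<longrightarrow> 1 \<le> i \<longrightarrow> i \<le> k \<longrightarrow>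
        dH p \<le> dH (take i p @ replicate (k - i) a) + dH (replicate i a @ drop i p)) \<and>
     (\<forall>p p'. length p = k \<longrightarrow> length p' = k \<longrightarrow> set p \<subset> set p' \<longrightarrow> dH p \<le> dH p') \<and>
     (\<forall>p p'. length p = k \<longrightarrow> length p' = k \<longrightarrow> set p = set p' \<longrightarrow> dH p \<le> real \<gamma> * dH p')"

(* An instance: requests are the indices 0..<m, i.e. V = {0..<m}. *)
definition MPMD_instance :: "nat \<Rightarrow> nat \<Rightarrow> (nat \<Rightarrow> real) \<Rightarrow> bool" where
  "MPMD_instance k m atime \<longleftrightarrow> k dvd m \<and> (\<forall>i<m. atime i \<ge> 0) \<and>
     (\<forall>i j. i \<le> j \<longrightarrow> j < m \<longrightarrow> atime i \<le> atime j)"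

definition perfect_kway_matching :: "nat \<Rightarrow> 'v set \<Rightarrow> 'v set set \<Rightarrow> bool" where
  "perfect_kway_matching k V \<M> \<longleftrightarrow> partition_on V \<M> \<and> (\<forall>F\<in>\<M>. card F = k)"

definition opt_cost_set :: "('a list \<Rightarrow> real) \<Rightarrow> (nat \<Rightarrow> real) \<Rightarrow> (nat \<Rightarrow> 'a) \<Rightarrow> nat set \<Rightarrow> real" where
  "opt_cost_set dH atime pos F =
     dH (map pos (sorted_list_of_set F)) + (\<Sum>v\<in>F. Max (atime ` F) - atime v)"

definition OPT :: "nat \<Rightarrow> ('a list \<Rightarrow> real) \<Rightarrow> nat \<Rightarrow> (nat \<Rightarrow> real) \<Rightarrow> (nat \<Rightarrow> 'a) \<Rightarrow> real" where
  "OPT k dH m atime pos =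
     Min {(\<Sum>F\<in>\<M>. opt_cost_set dH atime pos F) | \<M>. perfect_kway_matching k {0..<m} \<M>}"

definition dmet :: "nat \<Rightarrow> ('a list \<Rightarrow> real) \<Rightarrow> 'a \<Rightarrow> 'a \<Rightarrow> real" where
  "dmet k dH p q = dH (p # replicate (k - 1) q) + dH (q # replicate (k - 1) p)"

definition edges :: "nat set \<Rightarrow> nat set set" where
  "edges V = {e. \<exists>u w. u \<in> V \<and> w \<in> V \<and> u \<noteq> w \<and> e = {u, w}}"

definition opt_cost_edge :: "nat \<Rightarrow> ('a list \<Rightarrow> real) \<Rightarrow> (nat \<Rightarrow> real) \<Rightarrow> (nat \<Rightarrow> 'a) \<Rightarrow> nat set \<Rightarrow> real" where
  "opt_cost_edge k dH atime pos e =
     (THE c. \<exists>u w. e = {u, w} \<and> c = dmet k dH (pos u) (pos w) + \<bar>atime u - atime w\<bar>)"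

definition sur :: "nat \<Rightarrow> nat set \<Rightarrow> nat" where
  "sur k S = card S mod k"

definition cut :: "nat set \<Rightarrow> nat set \<Rightarrow> nat set set" where
  "cut V S = {e \<in> edges V. card (e \<inter> S) = 1}"

definition P'_feasible :: "nat \<Rightarrow> nat \<Rightarrow> (nat set \<Rightarrow> real) \<Rightarrow> bool" where
  "P'_feasible k m x \<longleftrightarrow>
     (\<forall>S\<subseteq>{0..<m}. (\<Sum>e\<in>cut {0..<m} S. x e) \<ge> real (sur k S * (k - sur k S))) \<and>
     (\<forall>e\<in>edges {0..<m}. x e \<ge> 0)"

definition P'_obj :: "nat \<Rightarrow> nat \<Rightarrow> ('a list \<Rightarrow> real) \<Rightarrow> nat \<Rightarrow> (nat \<Rightarrow> real) \<Rightarrow> (nat \<Rightarrow> 'a) \<Rightarrow> (nat set \<Rightarrow> real) \<Rightarrow> real" where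
  "P'_obj k \<gamma> dH m atime pos x =
     (\<Sum>e\<in>edges {0..<m}. 1 / (real \<gamma> * real k ^ 2) * opt_cost_edge k dH atime pos e * x e)"

definition P'_value :: "nat \<Rightarrow> nat \<Rightarrow> ('a list \<Rightarrow> real) \<Rightarrow> nat \<Rightarrow> (nat \<Rightarrow> real) \<Rightarrow> (nat \<Rightarrow> 'a) \<Rightarrow> real" where
  "P'_value k \<gamma> dH m atime pos = Inf {P'_obj k \<gamma> dH m atime pos x | x. P'_feasible k m x}"

end

theory Submission
  imports Defs
begin

text \<open>
  Feasibility: an edge inside a block \<open>F\<close> of the matching crosses \<open>S\<close> exactly when it joins
  \<open>F \<inter> S\<close> to \<open>F - S\<close>, so the cut value of the indicator vector is \<open>\<Sum>\<^sub>F r\<^sub>F (k - r\<^sub>F)\<close> with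
  \<open>r\<^sub>F = |F \<inter> S|\<close>.  Since \<open>\<Sum>\<^sub>F r\<^sub>F = |S|\<close> and \<open>r \<mapsto> r (k - r)\<close> is subadditive modulo \<open>k\<close>,
  this is at least \<open>sur(S) (k - sur(S))\<close>.

  Cost: for a pair \<open>u, w\<close> in a block \<open>F\<close>, both tuples defining \<open>d(pos u, pos w)\<close> use only
  positions occurring in \<open>F\<close>, so the monotonicity axioms of the \<open>H\<close>-metric bound \<open>d\<close> by
  \<open>2\<gamma> d\<^sub>H(F)\<close>; the time difference is at most the waiting cost of \<open>F\<close>.  As \<open>F\<close> has at most
  \<open>k\<^sup>2/2\<close> pairs, the edges of \<open>F\<close> contribute at most \<open>opt-cost(F)\<close> to the objective after the
  scaling by \<open>1/(\<gamma>k\<^sup>2)\<close>.  Applied to an optimal matching this gives \<open>P'(\<sigma>) \<le> OPT(\<sigma>)\<close>.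
  Neither argument needs the arrival times to be sorted.
\<close>

lemma opt_cost_edge_doubleton:
  "opt_cost_edge k dH atime pos {u, w} = dmet k dH (pos u) (pos w) + \<bar>atime u - atime w\<bar>"
  unfolding opt_cost_edge_def
proof (rule the_equality)
  fix c assume "\<exists>u' w'. {u, w} = {u', w'} \<and> c = dmet k dH (pos u') (pos w') + \<bar>atime u' - atime w'\<bar>"
  then show "c = dmet k dH (pos u) (pos w) + \<bar>atime u - atime w\<bar>"
    by (auto simp: doubleton_eq_iff dmet_def abs_minus_commute)
qed blast

lemma edges_eq_card_2_subsets: "edges F = {e. e \<subseteq> F \<and> card e = 2}"
  unfolding edges_def card_2_iff by blast

lemma finite_edges: "finite F \<Longrightarrow> finite (edges F)"
  unfolding edges_eq_card_2_subsets by (simp add: finite_Collect_subsets)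

lemma edges_mono: "F \<subseteq> V \<Longrightarrow> edges F \<subseteq> edges V"
  unfolding edges_eq_card_2_subsets by blast

lemma card_edges: "finite F \<Longrightarrow> card (edges F) = card F choose 2"
  unfolding edges_eq_card_2_subsets by (simp add: n_subsets)

lemma card_edges_le:
  assumes "finite F"
  shows "2 * card (edges F) \<le> card F ^ 2"
proof -
  have "2 * card (edges F) \<le> card F * (card F - 1)"
    using assms by (simp add: card_edges choose_two)
  also have "\<dots> \<le> card F ^ 2"
    by (simp add: power2_eq_square)
  finally show ?thesis .
qed

lemma card_crossing_edges:
  assumes "finite F"
  shows "card {e \<in> edges F. card (e \<inter> S) = 1} = card (F \<inter> S) * card (F - S)"
proof -
  have "{e \<in> edges F. card (e \<inter> S) = 1} = (\<lambda>(a, b). {a, b}) ` ((F \<inter> S) \<times> (F - S))"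
    unfolding edges_def
    by (auto simp: card_1_singleton_iff Int_insert_left image_iff split: if_splits)
      (metis Diff_iff IntI insert_commute)+
  moreover have "inj_on (\<lambda>(a, b). {a, b}) ((F \<inter> S) \<times> (F - S))"
    by (auto simp: inj_on_def doubleton_eq_iff)
  ultimately show ?thesis by (simp add: card_image card_cartesian_product)
qed

definition matching_edges :: "nat set \<Rightarrow> nat set set \<Rightarrow> nat set set" where
  "matching_edges V \<M> = {e \<in> edges V. \<exists>F\<in>\<M>. e \<subseteq> F}"

lemma matching_edges_partition_on:
  "partition_on V \<M> \<Longrightarrow> matching_edges V \<M> = (\<Union>F\<in>\<M>. edges F)"
  unfolding matching_edges_def edges_eq_card_2_subsets by (auto dest: partition_onD1)

lemma edges_disjoint_partition_on:
  assumes "partition_on V \<M>" "F \<in> \<M>" "G \<in> \<M>" "F \<noteq> G"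
  shows "edges F \<inter> edges G = {}"
proof -
  have "F \<inter> G = {}"
    using assms by (auto dest: partition_onD2 disjointD)
  then show ?thesis
    unfolding edges_eq_card_2_subsets
    by (auto simp del: card_2_iff) (metis Int_greatest card.empty subset_empty zero_neq_numeral)
qed

lemma sum_card_Int_partition_on:
  assumes "finite V" "partition_on V \<M>" "S \<subseteq> V"
  shows "(\<Sum>F\<in>\<M>. card (F \<inter> S)) = card S"
proof -
  have "card (\<Union>F\<in>\<M>. F \<inter> S) = (\<Sum>F\<in>\<M>. card (F \<inter> S))"
    using assms by (intro card_UN_disjoint)
      (auto simp: finite_elements dest: partition_onD1 partition_onD2 disjointD intro: finite_subset)
  moreover have "(\<Union>F\<in>\<M>. F \<inter> S) = S"
    using assms by (auto dest: partition_onD1)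
  ultimately show ?thesis by simp
qed

lemma mod_mult_compl_add_le:
  fixes r b k :: nat
  assumes "r < k" "b \<le> k"
  shows "(r + b) mod k * (k - (r + b) mod k) \<le> r * (k - r) + b * (k - b)"
proof (cases "r + b < k")
  case True
  then show ?thesis by (simp add: algebra_simps diff_mult_distrib2)
next
  case False
  then obtain c where c: "r + b = k + c" by (metis le_add_diff_inverse not_less)
  then have mod: "(r + b) mod k = c" using assms by simp
  obtain a' b' where "k = r + a'" "k = b + b'"
    using assms by (metis le_add_diff_inverse less_imp_le)
  then have "r = c + b'" "b = c + a'" "k - c = a' + b'" "k - r = a'" "k - b = b'"
    using c by linarith+
  moreover have "c * (a' + b') \<le> (c + b') * a' + (c + a') * b'"
    by (simp add: algebra_simps)
  ultimately show ?thesis unfolding mod by simp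
qed

lemma sum_mod_mult_compl_le:
  fixes s :: "'b \<Rightarrow> nat"
  assumes "finite I" "\<And>i. i \<in> I \<Longrightarrow> s i \<le> k" "0 < k"
  shows "(\<Sum>i\<in>I. s i) mod k * (k - (\<Sum>i\<in>I. s i) mod k) \<le> (\<Sum>i\<in>I. s i * (k - s i))"
  using assms
proof (induction I rule: finite_induct)
  case empty
  then show ?case by simp
next
  case (insert i I)
  let ?r = "(\<Sum>i\<in>I. s i) mod k"
  have "(\<Sum>i\<in>insert i I. s i) = (\<Sum>i\<in>I. s i) + s i"
    using insert by simp
  then have "(\<Sum>i\<in>insert i I. s i) mod k = (?r + s i) mod k"
    by (simp only: mod_add_left_eq)
  moreover have "(?r + s i) mod k * (k - (?r + s i) mod k) \<le> ?r * (k - ?r) + s i * (k - s i)"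
    using insert by (intro mod_mult_compl_add_le) auto
  moreover have "?r * (k - ?r) \<le> (\<Sum>i\<in>I. s i * (k - s i))"
    using insert by auto
  ultimately show ?case using insert by simp
qed

lemma card_cut_Int_matching_edges:
  assumes V: "finite V" and P: "partition_on V \<M>"
  shows "card (cut V S \<inter> matching_edges V \<M>) = (\<Sum>F\<in>\<M>. card (F \<inter> S) * card (F - S))"
proof -
  have fin: "finite F" if "F \<in> \<M>" for F
    using V P that by (auto dest: partition_onD1 intro: finite_subset)
  have "cut V S \<inter> matching_edges V \<M> = (\<Union>F\<in>\<M>. {e \<in> edges F. card (e \<inter> S) = 1})"
    using edges_mono[of _ V] P
    unfolding matching_edges_partition_on[OF P] cut_def by (auto dest: partition_onD1)
  also have "card \<dots> = (\<Sum>F\<in>\<M>. card {e \<in> edges F. card (e \<inter> S) = 1})"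
    using V P fin edges_disjoint_partition_on[OF P]
    by (intro card_UN_disjoint) (auto simp: finite_elements finite_edges)
  also have "\<dots> = (\<Sum>F\<in>\<M>. card (F \<inter> S) * card (F - S))"
    by (intro sum.cong refl card_crossing_edges fin)
  finally show ?thesis .
qed

lemma P'_feasible_matching_edges:
  assumes k: "0 < k" and \<M>: "perfect_kway_matching k {0..<m} \<M>"
  shows "P'_feasible k m (\<lambda>e. if e \<in> matching_edges {0..<m} \<M> then 1 else 0)"
  unfolding P'_feasible_def
proof (intro conjI allI impI ballI)
  fix S assume S: "S \<subseteq> {0..<m}"
  have P: "partition_on {0..<m} \<M>" and card: "\<And>F. F \<in> \<M> \<Longrightarrow> card F = k"
    using \<M> unfolding perfect_kway_matching_def by auto
  have fin: "finite F" if "F \<in> \<M>" for F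
    using P that by (auto dest: partition_onD1 intro: finite_subset)
  have "sur k S * (k - sur k S) \<le> (\<Sum>F\<in>\<M>. card (F \<inter> S) * (k - card (F \<inter> S)))"
    unfolding sur_def sum_card_Int_partition_on[OF _ P S, symmetric, simplified]
  proof (intro sum_mod_mult_compl_le k)
    show "finite \<M>" using finite_elements[OF _ P] by simp
    show "card (F \<inter> S) \<le> k" if "F \<in> \<M>" for F
      using fin[OF that] card[OF that] by (metis Int_lower1 card_mono)
  qed
  also have "\<dots> = card (cut {0..<m} S \<inter> matching_edges {0..<m} \<M>)"
    unfolding card_cut_Int_matching_edges[OF _ P, simplified]
    using fin card by (intro sum.cong) (auto simp: card_Diff_subset_Int Int_commute Diff_Int2)
  finally have "sur k S * (k - sur k S) \<le> card (cut {0..<m} S \<inter> matching_edges {0..<m} \<M>)" .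
  moreover have "(\<Sum>e\<in>cut {0..<m} S. if e \<in> matching_edges {0..<m} \<M> then 1 else 0 :: real)
      = real (card (cut {0..<m} S \<inter> matching_edges {0..<m} \<M>))"
    by (simp add: sum.If_cases cut_def finite_edges)
  ultimately show "real (sur k S * (k - sur k S))
      \<le> (\<Sum>e\<in>cut {0..<m} S. if e \<in> matching_edges {0..<m} \<M> then 1 else 0)"
    by linarith
qed simp

lemma H_metric_parameter_bounds:
  assumes "H_metric k \<gamma> dH"
  shows "1 \<le> \<gamma>" "\<gamma> < k"
proof -
  have "1 \<le> \<gamma>" "\<gamma> \<le> k - 1" using assms unfolding H_metric_def by blast+
  then show "1 \<le> \<gamma>" "\<gamma> < k" by linarith+
qed

lemma H_metric_nonneg: "H_metric k \<gamma> dH \<Longrightarrow> length p = k \<Longrightarrow> 0 \<le> dH p"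
  unfolding H_metric_def by blast

lemma H_metric_le_of_subset:
  assumes H: "H_metric k \<gamma> dH" and len: "length p = k" "length q = k" and sub: "set p \<subseteq> set q"
  shows "dH p \<le> real \<gamma> * dH q"
proof (cases "set p = set q")
  case True
  moreover have "\<forall>p p'. length p = k \<longrightarrow> length p' = k \<longrightarrow> set p = set p' \<longrightarrow> dH p \<le> real \<gamma> * dH p'"
    using H unfolding H_metric_def by blast
  ultimately show ?thesis using len by blast
next
  case False
  moreover have "\<forall>p p'. length p = k \<longrightarrow> length p' = k \<longrightarrow> set p \<subset> set p' \<longrightarrow> dH p \<le> dH p'"
    using H unfolding H_metric_def by blast
  ultimately have "dH p \<le> dH q" using len sub by blast
  moreover have "1 \<le> real \<gamma>"
    using H_metric_parameter_bounds[OF H] by simp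
  ultimately show ?thesis
    using H_metric_nonneg[OF H len(2)] mult_right_mono[of 1 "real \<gamma>" "dH q"] by linarith
qed

lemma dmet_nonneg: "H_metric k \<gamma> dH \<Longrightarrow> 1 \<le> k \<Longrightarrow> 0 \<le> dmet k dH p q"
  unfolding dmet_def by (simp add: H_metric_nonneg)

lemma dmet_le_H_metric_block:
  assumes H: "H_metric k \<gamma> dH" and F: "finite F" "card F = k" and uw: "u \<in> F" "w \<in> F"
  shows "dmet k dH (pos u) (pos w) \<le> 2 * real \<gamma> * dH (map pos (sorted_list_of_set F))"
proof -
  have "1 \<le> k" using F(1) uw by (auto simp: F(2)[symmetric] Suc_le_eq card_gt_0_iff)
  have "dH (pos x # replicate (k - 1) (pos y)) \<le> real \<gamma> * dH (map pos (sorted_list_of_set F))"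
    if "x \<in> F" "y \<in> F" for x y
  proof (rule H_metric_le_of_subset[OF H])
    show "length (pos x # replicate (k - 1) (pos y)) = k" using \<open>1 \<le> k\<close> by simp
    show "length (map pos (sorted_list_of_set F)) = k" using F by simp
    show "set (pos x # replicate (k - 1) (pos y)) \<subseteq> set (map pos (sorted_list_of_set F))"
      using F(1) that by (auto simp: set_replicate_conv_if)
  qed
  from this[OF uw] this[OF uw(2,1)] show ?thesis unfolding dmet_def by linarith
qed

lemma opt_cost_edge_le:
  assumes H: "H_metric k \<gamma> dH" and F: "finite F" "card F = k" and e: "e \<in> edges F"
  shows "opt_cost_edge k dH atime pos e \<le> 2 * real \<gamma> * dH (map pos (sorted_list_of_set F))
           + (\<Sum>v\<in>F. Max (atime ` F) - atime v)"
proof -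
  obtain u w where uw: "u \<in> F" "w \<in> F" "u \<noteq> w" "e = {u, w}"
    using e unfolding edges_def by auto
  have "atime u \<le> Max (atime ` F)" "atime w \<le> Max (atime ` F)"
    using uw F by simp_all
  then have "\<bar>atime u - atime w\<bar> \<le> (\<Sum>v\<in>{u, w}. Max (atime ` F) - atime v)"
    using uw(3) by simp
  also have "\<dots> \<le> (\<Sum>v\<in>F. Max (atime ` F) - atime v)"
    using uw F by (intro sum_mono2) auto
  finally show ?thesis
    using dmet_le_H_metric_block[OF H F uw(1,2), of pos]
    unfolding uw(4) opt_cost_edge_doubleton by linarith
qed

lemma sum_opt_cost_edge_le_opt_cost_set:
  assumes H: "H_metric k \<gamma> dH" and F: "finite F" "card F = k"
  shows "(\<Sum>e\<in>edges F. opt_cost_edge k dH atime pos e)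
    \<le> real \<gamma> * real k ^ 2 * opt_cost_set dH atime pos F"
proof -
  define D where "D = dH (map pos (sorted_list_of_set F))"
  define T where "T = (\<Sum>v\<in>F. Max (atime ` F) - atime v)"
  have \<gamma>: "1 \<le> real \<gamma>" using H_metric_parameter_bounds[OF H] by simp
  have D: "0 \<le> D" unfolding D_def using H_metric_nonneg[OF H] F by simp
  have T: "0 \<le> T" unfolding T_def using F by (intro sum_nonneg) auto
  have DT: "0 \<le> real \<gamma> * (D + T)"
    using \<gamma> D T by simp
  have "T \<le> 2 * real \<gamma> * T"
    using \<gamma> T mult_right_mono[of 1 "2 * real \<gamma>" T] by linarith
  then have "opt_cost_edge k dH atime pos e \<le> 2 * real \<gamma> * (D + T)" if "e \<in> edges F" for e
    using opt_cost_edge_le[OF H F that, where atime = atime and pos = pos]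
    unfolding D_def T_def distrib_left by linarith
  then have "(\<Sum>e\<in>edges F. opt_cost_edge k dH atime pos e) \<le> (\<Sum>e\<in>edges F. 2 * real \<gamma> * (D + T))"
    by (rule sum_mono)
  also have "\<dots> = real (2 * card (edges F)) * (real \<gamma> * (D + T))"
    by simp
  also have "\<dots> \<le> real (k ^ 2) * (real \<gamma> * (D + T))"
    using card_edges_le[OF F(1)] DT F(2) by (intro mult_right_mono of_nat_mono) auto
  finally show ?thesis
    unfolding opt_cost_set_def D_def T_def by (simp add: algebra_simps)
qed

lemma P'_obj_matching_edges_le:
  assumes H: "H_metric k \<gamma> dH" and \<M>: "perfect_kway_matching k {0..<m} \<M>"
  shows "P'_obj k \<gamma> dH m atime pos (\<lambda>e. if e \<in> matching_edges {0..<m} \<M> then 1 else 0)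
    \<le> (\<Sum>F\<in>\<M>. opt_cost_set dH atime pos F)"
proof -
  define q where "q = real \<gamma> * real k ^ 2"
  let ?c = "opt_cost_edge k dH atime pos"
  have q: "0 < q" unfolding q_def using H_metric_parameter_bounds[OF H] by simp
  have P: "partition_on {0..<m} \<M>" and card: "\<And>F. F \<in> \<M> \<Longrightarrow> card F = k"
    using \<M> unfolding perfect_kway_matching_def by auto
  have fin: "finite F" if "F \<in> \<M>" for F
    using P that by (auto dest: partition_onD1 intro: finite_subset)
  have "P'_obj k \<gamma> dH m atime pos (\<lambda>e. if e \<in> matching_edges {0..<m} \<M> then 1 else 0)
      = (\<Sum>e\<in>edges {0..<m}. if \<exists>F\<in>\<M>. e \<subseteq> F then ?c e / q else 0)"
    unfolding P'_obj_def q_def by (intro sum.cong) (auto simp: matching_edges_def)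
  also have "\<dots> = (\<Sum>e\<in>matching_edges {0..<m} \<M>. ?c e / q)"
    unfolding matching_edges_def by (rule sum.inter_filter[symmetric]) (simp add: finite_edges)
  also have "\<dots> = (\<Sum>F\<in>\<M>. (\<Sum>e\<in>edges F. ?c e) / q)"
    unfolding matching_edges_partition_on[OF P] sum_divide_distrib
    using finite_elements[OF _ P] fin edges_disjoint_partition_on[OF P]
    by (intro sum.UNION_disjoint) (auto simp: finite_edges)
  also have "\<dots> \<le> (\<Sum>F\<in>\<M>. opt_cost_set dH atime pos F)"
    using sum_opt_cost_edge_le_opt_cost_set[OF H fin card] q
    by (intro sum_mono) (simp add: q_def divide_le_eq mult.commute)
  finally show ?thesis .
qed

lemma P'_obj_nonneg:
  assumes H: "H_metric k \<gamma> dH" and x: "P'_feasible k m x"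
  shows "0 \<le> P'_obj k \<gamma> dH m atime pos x"
  unfolding P'_obj_def
proof (intro sum_nonneg mult_nonneg_nonneg)
  fix e assume e: "e \<in> edges {0..<m}"
  then obtain u w where "e = {u, w}" unfolding edges_def by blast
  moreover have "1 \<le> k" using H_metric_parameter_bounds[OF H] by linarith
  ultimately show "0 \<le> opt_cost_edge k dH atime pos e"
    using dmet_nonneg[OF H] by (simp add: opt_cost_edge_doubleton)
  show "0 \<le> x e" using x e unfolding P'_feasible_def by blast
qed simp

lemma OPT_attained:
  assumes "perfect_kway_matching k {0..<m} \<M>"
  obtains \<M>' where "perfect_kway_matching k {0..<m} \<M>'"
    and "OPT k dH m atime pos = (\<Sum>F\<in>\<M>'. opt_cost_set dH atime pos F)"
proof -
  let ?A = "{(\<Sum>F\<in>\<M>. opt_cost_set dH atime pos F) | \<M>. perfect_kway_matching k {0..<m} \<M>}"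
  have "{\<M>. perfect_kway_matching k {0..<m} \<M>} \<subseteq> {P. partition_on {0..<m} P}"
    unfolding perfect_kway_matching_def by blast
  then have "finite ?A"
    using finitely_many_partition_on[of "{0..<m::nat}"] by (simp add: finite_subset finite_image_set)
  moreover have "?A \<noteq> {}" using assms by blast
  ultimately have "Min ?A \<in> ?A" by (rule Min_in)
  then show ?thesis using that unfolding OPT_def by auto
qed

theorem lemma2:
  fixes k \<gamma> m :: nat and dH :: "'a list \<Rightarrow> real"
    and atime :: "nat \<Rightarrow> real" and pos :: "nat \<Rightarrow> 'a" and \<M> :: "nat set set"
  assumes "k \<ge> 2"
    and "H_metric k \<gamma> dH"
    and "MPMD_instance k m atime"
    and "perfect_kway_matching k {0..<m} \<M>"
  shows "P'_feasible k m (\<lambda>e. if e \<in> {e \<in> edges {0..<m}. \<exists>F\<in>\<M>. e \<subseteq> F} then 1 else 0)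
         \<and> P'_value k \<gamma> dH m atime pos \<le> OPT k dH m atime pos"
proof -
  have feasible: "P'_feasible k m (\<lambda>e. if e \<in> matching_edges {0..<m} \<M>' then 1 else 0)"
    if "perfect_kway_matching k {0..<m} \<M>'" for \<M>'
    using assms(1) by (intro P'_feasible_matching_edges that) simp
  obtain \<M>' where \<M>': "perfect_kway_matching k {0..<m} \<M>'"
    and OPT: "OPT k dH m atime pos = (\<Sum>F\<in>\<M>'. opt_cost_set dH atime pos F)"
    using OPT_attained[OF assms(4)] .
  have "P'_value k \<gamma> dH m atime pos
      \<le> P'_obj k \<gamma> dH m atime pos (\<lambda>e. if e \<in> matching_edges {0..<m} \<M>' then 1 else 0)"
    unfolding P'_value_def using feasible[OF \<M>'] P'_obj_nonneg[OF assms(2)]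
    by (intro cInf_lower bdd_belowI[where m = 0]) auto
  also have "\<dots> \<le> OPT k dH m atime pos"
    unfolding OPT by (rule P'_obj_matching_edges_le[OF assms(2) \<M>'])
  finally show ?thesis
    using feasible[OF assms(4)] unfolding matching_edges_def by blast
qed

end
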